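(* Let $\mathcal{H}$ be a complex Hilbert space, let $V_1,V_2\in\mathcal{B}(\mathcal{H})$ be isometries and let $Q\in\mathcal{B}(\mathcal{H})$ be a unitary such that $V_2V_1=QV_1V_2$. Then there exist a Hilbert space $\mathcal{K}\supseteq\mathcal{H}$ and unitaries $\overline{Q},U_1,U_2\in\mathcal{B}(\mathcal{K})$, with $\mathcal{H}$ reducing $\overline{Q}$ and $\overline{Q}|_{\mathcal{H}}=Q$, such that (i) $U_2U_1=\overline{Q}U_1U_2$; and (ii) $U_i$ is an extension of $V_i$ for $i=1,2$, so that $V_1^nV_2^m=P_{\mathcal{H}}U_1^nU_2^m|_{\mathcal{H}}$ and $V_2^nV_1^m=P_{\mathcal{H}}U_2^nU_1^m|_{\mathcal{H}}$ for all integers $n,m\geq 0$. In fact, given any $q\in\mathbb{T}$, one can choose $\overline{Q}=Q\oplus qI_{\mathcal{K}\ominus\mathcal{H}}$.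
   Context: $S\in\mathcal{B}(\mathcal{K})$ is an extension of $T\in\mathcal{B}(\mathcal{H})$ ($\mathcal{H}\subseteq\mathcal{K}$) if $Sh=Th$ for all $h\in\mathcal{H}$. $\mathbb{T}$ is the unit circle; $P_{\mathcal{H}}$ the orthogonal projection onto $\mathcal{H}$. *)

theory Defs
  imports "HOL-Analysis.Analysis"
begin

class chilbert_space = real_normed_vector + complete_space +
  fixes scaleC :: "complex \<Rightarrow> 'a \<Rightarrow> 'a" (infixr \<open>*\<^sub>C\<close> 75)
  fixes cinner :: "'a \<Rightarrow> 'a \<Rightarrow> complex"
  assumes scaleC_add_right: "a *\<^sub>C (x + y) = a *\<^sub>C x + a *\<^sub>C y"
    and scaleC_add_left: "(a + b) *\<^sub>C x = a *\<^sub>C x + b *\<^sub>C x"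
    and scaleC_scaleC: "a *\<^sub>C (b *\<^sub>C x) = (a * b) *\<^sub>C x"
    and scaleC_one: "1 *\<^sub>C x = x"
    and scaleR_scaleC: "scaleR r x = complex_of_real r *\<^sub>C x"
    and norm_scaleC: "norm (a *\<^sub>C x) = cmod a * norm x"
    and cinner_commute: "cinner x y = cnj (cinner y x)"
    and cinner_add_left: "cinner (x + y) z = cinner x z + cinner y z"
    and cinner_scaleC_left: "cinner (r *\<^sub>C x) y = cnj r * cinner x y"
    and cinner_self_real_nonneg: "Im (cinner x x) = 0 \<and> 0 \<le> Re (cinner x x)"
    and cinner_eq_zero_iff: "cinner x x = 0 \<longleftrightarrow> x = 0"
    and norm_eq_sqrt_cinner: "norm x = sqrt (Re (cinner x x))"

definition cblinear :: "('a::chilbert_space \<Rightarrow> 'b::chilbert_space) \<Rightarrow> bool" where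
  "cblinear T \<longleftrightarrow> bounded_linear T \<and> (\<forall>c x. T (c *\<^sub>C x) = c *\<^sub>C T x)"

definition isometry_op :: "('a::chilbert_space \<Rightarrow> 'a) \<Rightarrow> bool" where
  "isometry_op V \<longleftrightarrow> cblinear V \<and> (\<forall>x. norm (V x) = norm x)"

definition unitary_op :: "('a::chilbert_space \<Rightarrow> 'a) \<Rightarrow> bool" where
  "unitary_op U \<longleftrightarrow> isometry_op U \<and> surj U"

text \<open>The dilation space K is realised as a closed subspace of the Hilbert space
  l2(N,H) of square-summable H-valued sequences; H is identified with the
  subspace of sequences supported at index 0 via emb.\<close>

definition l2 :: "(nat \<Rightarrow> 'a::chilbert_space) set" where
  "l2 = {f. summable (\<lambda>n. (norm (f n))\<^sup>2)}"

definition l2norm :: "(nat \<Rightarrow> 'a::chilbert_space) \<Rightarrow> real" where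
  "l2norm f = sqrt (\<Sum>n. (norm (f n))\<^sup>2)"

definition emb :: "'a::chilbert_space \<Rightarrow> nat \<Rightarrow> 'a" where
  "emb h = (\<lambda>n. if n = 0 then h else 0)"

text \<open>The orthogonal projection P_H of l2(N,H) onto (the copy of) H, read back in H.\<close>
definition projH :: "(nat \<Rightarrow> 'a::chilbert_space) \<Rightarrow> 'a" where
  "projH f = f 0"

definition closed_subspace_l2 :: "(nat \<Rightarrow> 'a::chilbert_space) set \<Rightarrow> bool" where
  "closed_subspace_l2 K \<longleftrightarrow>
     K \<subseteq> l2 \<and> (\<lambda>n. 0) \<in> K \<and>
     (\<forall>f\<in>K. \<forall>g\<in>K. (\<lambda>n. f n + g n) \<in> K) \<and>
     (\<forall>c. \<forall>f\<in>K. (\<lambda>n. c *\<^sub>C f n) \<in> K) \<and>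
     (\<forall>x f. (\<forall>k. x k \<in> K) \<longrightarrow> f \<in> l2 \<longrightarrow>
        (\<lambda>k. l2norm (\<lambda>n. x k n - f n)) \<longlonglongrightarrow> 0 \<longrightarrow> f \<in> K)"

definition unitary_on :: "(nat \<Rightarrow> 'a::chilbert_space) set \<Rightarrow>
    ((nat \<Rightarrow> 'a) \<Rightarrow> (nat \<Rightarrow> 'a)) \<Rightarrow> bool" where
  "unitary_on K U \<longleftrightarrow>
     U ` K = K \<and>
     (\<forall>f\<in>K. \<forall>g\<in>K. U (\<lambda>n. f n + g n) = (\<lambda>n. U f n + U g n)) \<and>
     (\<forall>c. \<forall>f\<in>K. U (\<lambda>n. c *\<^sub>C f n) = (\<lambda>n. c *\<^sub>C U f n)) \<and>
     (\<forall>f\<in>K. l2norm (U f) = l2norm f)"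

end

theory Submission
  imports Defs
begin

(* Let W = V1 V2, again an isometry. Its minimal unitary extension Wext acts on
   K = H \<oplus> D \<oplus> D \<oplus> ..., D = (ran W)\<^sup>\<bottom>, by (h, d1, d2, ...) \<mapsto> (W h + d1, d2, ...);
   let Qbar = Q \<oplus> q I and QWext = Qbar Wext. If U1 is a unitary of K extending V1 and
   U2 = U1\<^sup>-\<^sup>1 Wext (which extends V2), then U2 U1 = Qbar U1 U2 says exactly that
   Wext U1 = U1 QWext. Such a U1 is forced on vectors f vanishing beyond n: QWext^n f lies in H,
   so U1 f = Wext^-n (V1 (QWext^n f)). The relation V2 V1 = Q V1 V2, in the form
   V1 Q W = W V1, makes this independent of n, and it is isometric, so it extends to an isometry
   of K. Its range is closed and contains every finitely supported vector (induction on the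
   support, starting from Wext (emb h) = U1 (emb (V2 h))), hence U1 is unitary. *)

lemma scaleC_zero_left [simp]: "0 *\<^sub>C (x::'a::chilbert_space) = 0"
  using scaleC_add_left[of 0 0 x] by simp

lemma scaleC_zero_right [simp]: "c *\<^sub>C (0::'a::chilbert_space) = 0"
  using scaleC_add_right[of c 0 "0::'a"] by simp

lemma scaleC_minus_right: "c *\<^sub>C (- x::'a::chilbert_space) = - (c *\<^sub>C x)"
  using scaleC_add_right[of c x "- x"] by (simp add: eq_neg_iff_add_eq_0 add.commute)

lemma scaleC_diff_right: "c *\<^sub>C (x - y::'a::chilbert_space) = c *\<^sub>C x - c *\<^sub>C y"
  using scaleC_add_right[of c x "- y"] by (simp add: scaleC_minus_right)

lemma scaleC_minus_one_left: "(-1) *\<^sub>C (x::'a::chilbert_space) = - x"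
  using scaleC_add_left[of 1 "-1" x] by (simp add: scaleC_one eq_neg_iff_add_eq_0 add.commute)

lemma bounded_linear_scaleC_right: "bounded_linear (\<lambda>x::'a::chilbert_space. c *\<^sub>C x)"
proof (rule bounded_linear_intro[where K = "cmod c"])
  show "c *\<^sub>C (x + y) = c *\<^sub>C x + c *\<^sub>C (y::'a)" for x y
    by (rule scaleC_add_right)
  show "c *\<^sub>C (r *\<^sub>R x) = r *\<^sub>R (c *\<^sub>C (x::'a))" for r x
    by (simp add: scaleR_scaleC scaleC_scaleC mult.commute)
  show "norm (c *\<^sub>C x) \<le> norm (x::'a) * cmod c" for x
    by (simp add: norm_scaleC mult.commute)
qed

definition re_cinner :: "'a::chilbert_space \<Rightarrow> 'a \<Rightarrow> real" where
  "re_cinner x y = Re (cinner x y)"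

lemma re_cinner_commute: "re_cinner x y = re_cinner y x"
  unfolding re_cinner_def by (subst cinner_commute) simp

lemma re_cinner_add_left: "re_cinner (x + y) z = re_cinner x z + re_cinner y z"
  unfolding re_cinner_def by (simp add: cinner_add_left)

lemma re_cinner_add_right: "re_cinner z (x + y) = re_cinner z x + re_cinner z y"
  using re_cinner_add_left re_cinner_commute by metis

lemma re_cinner_scaleR_left: "re_cinner (r *\<^sub>R x) y = r * re_cinner x y"
  unfolding re_cinner_def scaleR_scaleC cinner_scaleC_left by simp

lemma re_cinner_scaleR_right: "re_cinner y (r *\<^sub>R x) = r * re_cinner y x"
  using re_cinner_scaleR_left re_cinner_commute by metis

lemma re_cinner_minus_right: "re_cinner y (- x) = - re_cinner y x"
  using re_cinner_scaleR_right[of y "-1" x] by simp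

lemma re_cinner_diff_right: "re_cinner z (x - y) = re_cinner z x - re_cinner z y"
  using re_cinner_add_right[of z x "- y"] by (simp add: re_cinner_minus_right)

lemma re_cinner_zero_right [simp]: "re_cinner y 0 = 0"
  using re_cinner_scaleR_right[of y 0 y] by simp

lemma power2_norm_eq_re_cinner: "(norm (x::'a::chilbert_space))\<^sup>2 = re_cinner x x"
  using cinner_self_real_nonneg[of x] unfolding norm_eq_sqrt_cinner[of x] re_cinner_def by simp

lemma power2_norm_add:
  "(norm (x + y::'a::chilbert_space))\<^sup>2 = (norm x)\<^sup>2 + (norm y)\<^sup>2 + 2 * re_cinner x y"
  by (simp add: power2_norm_eq_re_cinner re_cinner_add_left re_cinner_add_right
      re_cinner_commute[of y x])

lemma power2_norm_diff:
  "(norm (x - y::'a::chilbert_space))\<^sup>2 = (norm x)\<^sup>2 + (norm y)\<^sup>2 - 2 * re_cinner x y"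
  using power2_norm_add[of x "- y"] by (simp add: re_cinner_minus_right)

lemma pythagoras:
  "re_cinner x y = 0 \<Longrightarrow> (norm (x + y::'a::chilbert_space))\<^sup>2 = (norm x)\<^sup>2 + (norm y)\<^sup>2"
  by (simp add: power2_norm_add)

lemma parallelogram_law:
  "(norm (x - y::'a::chilbert_space))\<^sup>2 + (norm (x + y))\<^sup>2 = 2 * (norm x)\<^sup>2 + 2 * (norm y)\<^sup>2"
  by (simp add: power2_norm_add power2_norm_diff)

lemma re_cinner_scaleC_scaleC:
  "re_cinner (c *\<^sub>C x) (c *\<^sub>C y) = (cmod c)\<^sup>2 * re_cinner (x::'a::chilbert_space) y"
proof -
  have polarization: "4 * re_cinner u v = (norm (u + v))\<^sup>2 - (norm (u - v))\<^sup>2" for u v :: 'a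
    by (simp add: power2_norm_add power2_norm_diff)
  have "4 * re_cinner (c *\<^sub>C x) (c *\<^sub>C y) = (norm (c *\<^sub>C (x + y)))\<^sup>2 - (norm (c *\<^sub>C (x - y)))\<^sup>2"
    by (simp add: polarization scaleC_add_right scaleC_diff_right)
  also have "\<dots> = (cmod c)\<^sup>2 * ((norm (x + y))\<^sup>2 - (norm (x - y))\<^sup>2)"
    by (simp add: norm_scaleC power_mult_distrib algebra_simps)
  also have "\<dots> = (cmod c)\<^sup>2 * (4 * re_cinner x y)"
    by (simp only: polarization)
  finally show ?thesis by simp
qed

lemma isometry_op_bounded_linear: "isometry_op W \<Longrightarrow> bounded_linear W"
  unfolding isometry_op_def cblinear_def by simp

lemma isometry_op_norm: "isometry_op W \<Longrightarrow> norm (W x) = norm x"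
  unfolding isometry_op_def by simp

lemma isometry_op_scaleC: "isometry_op W \<Longrightarrow> W (c *\<^sub>C x) = c *\<^sub>C W x"
  unfolding isometry_op_def cblinear_def by simp

lemma isometry_op_add: "isometry_op W \<Longrightarrow> W (x + y) = W x + W y"
  by (metis isometry_op_bounded_linear bounded_linear.linear linear_add)

lemma isometry_op_diff: "isometry_op W \<Longrightarrow> W (x - y) = W x - W y"
  by (metis isometry_op_bounded_linear bounded_linear.linear linear_diff)

lemma isometry_op_zero: "isometry_op W \<Longrightarrow> W 0 = 0"
  by (metis isometry_op_bounded_linear bounded_linear.linear linear_0)

lemma isometry_op_scaleR: "isometry_op W \<Longrightarrow> W (r *\<^sub>R x) = r *\<^sub>R W x"
  by (metis isometry_op_bounded_linear bounded_linear.linear linear_scale)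

lemma isometry_op_comp: "isometry_op A \<Longrightarrow> isometry_op B \<Longrightarrow> isometry_op (\<lambda>x. A (B x))"
  unfolding isometry_op_def cblinear_def using bounded_linear_compose[of A B] by auto

lemma unitary_op_isometry_op: "unitary_op Q \<Longrightarrow> isometry_op Q"
  and unitary_op_surj: "unitary_op Q \<Longrightarrow> surj Q"
  unfolding unitary_op_def by simp_all

locale isometry =
  fixes W :: "'a::chilbert_space \<Rightarrow> 'a"
  assumes isometry: "isometry_op W"
begin

lemmas W_norm = isometry_op_norm[OF isometry]
  and W_add = isometry_op_add[OF isometry]
  and W_diff = isometry_op_diff[OF isometry]
  and W_zero = isometry_op_zero[OF isometry]
  and W_scaleC = isometry_op_scaleC[OF isometry]
  and W_scaleR = isometry_op_scaleR[OF isometry]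
  and W_bounded_linear = isometry_op_bounded_linear[OF isometry]

lemma best_approx_dist_bound:
  assumes d: "\<And>c. d \<le> (norm (x - W c))\<^sup>2"
  shows "(norm (a - a'))\<^sup>2 \<le> 2 * ((norm (x - W a))\<^sup>2 - d) + 2 * ((norm (x - W a'))\<^sup>2 - d)"
proof -
  define u where "u = x - W a"
  define v where "v = x - W a'"
  have "u + v = 2 *\<^sub>R (x - W ((1/2::real) *\<^sub>R (a + a')))"
    unfolding u_def v_def by (simp add: W_add W_scaleR algebra_simps scaleR_2)
  then have "(norm (u + v))\<^sup>2 \<ge> 4 * d"
    using d[of "(1/2::real) *\<^sub>R (a + a')"] by (simp add: power_mult_distrib)
  moreover have "(norm (u - v))\<^sup>2 = (norm (a - a'))\<^sup>2"
    unfolding u_def v_def by (simp add: W_diff[symmetric] W_norm norm_minus_commute)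
  ultimately have "(norm (a - a'))\<^sup>2 \<le> 2 * ((norm u)\<^sup>2 - d) + 2 * ((norm v)\<^sup>2 - d)"
    using parallelogram_law[of u v] by (smt (verit))
  then show ?thesis
    unfolding u_def v_def .
qed

lemma minimizing_sequence_Cauchy:
  assumes d: "\<And>c. d \<le> (norm (x - W c))\<^sup>2"
    and a: "\<And>n. (norm (x - W (a n)))\<^sup>2 < d + inverse (real (Suc n))"
  shows "Cauchy a"
proof (rule metric_CauchyI)
  fix e :: real
  assume "e > 0"
  then obtain N where N: "inverse (real (Suc N)) < e\<^sup>2 / 4"
    using reals_Archimedean by (metis zero_less_power divide_pos_pos zero_less_numeral)
  have "norm (a m - a n) < e" if "N \<le> m" "N \<le> n" for m n
  proof -
    have "inverse (real (Suc m)) \<le> inverse (real (Suc N))" "inverse (real (Suc n)) \<le> inverse (real (Suc N))"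
      using that by simp_all
    then have "(norm (a m - a n))\<^sup>2 < 4 * inverse (real (Suc N))"
      using best_approx_dist_bound[of d x "a m" "a n", OF d] a[of m] a[of n] by (smt (verit))
    then have "(norm (a m - a n))\<^sup>2 < e\<^sup>2"
      using N by linarith
    then show ?thesis
      using \<open>e > 0\<close> by (simp add: power_less_imp_less_base)
  qed
  then show "\<exists>M. \<forall>m\<ge>M. \<forall>n\<ge>M. dist (a m) (a n) < e"
    by (auto simp: dist_norm)
qed

lemma best_approx_exists: "\<exists>a. \<forall>b. norm (x - W a) \<le> norm (x - W b)"
proof -
  define F where "F = (\<lambda>a. (norm (x - W a))\<^sup>2)"
  define d where "d = Inf (range F)"
  have d_le: "d \<le> F a" for a
    unfolding d_def F_def by (rule cINF_lower) (auto intro: bdd_belowI[of _ 0])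
  have "\<exists>a. F a < d + inverse (real (Suc n))" for n
    using cInf_lessD[of "range F" "d + inverse (real (Suc n))"] unfolding d_def by auto
  then obtain a where a: "\<And>n. F (a n) < d + inverse (real (Suc n))"
    by metis
  have "Cauchy a"
    using d_le a unfolding F_def by (rule minimizing_sequence_Cauchy)
  then obtain a0 where "a \<longlonglongrightarrow> a0"
    using Cauchy_convergent_iff convergent_def by blast
  then have "(\<lambda>n. F (a n)) \<longlonglongrightarrow> F a0"
    unfolding F_def by (intro tendsto_intros bounded_linear.tendsto[OF W_bounded_linear])
  moreover have "(\<lambda>n. d + inverse (real (Suc n))) \<longlonglongrightarrow> d + 0"
    by (intro tendsto_intros LIMSEQ_inverse_real_of_nat)
  ultimately have "F a0 \<le> d"
    using a by (intro LIMSEQ_le) (auto intro: less_imp_le)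
  then have "F a0 \<le> F b" for b
    using d_le[of b] by simp
  then show ?thesis
    unfolding F_def by (meson norm_ge_zero power2_le_imp_le)
qed

lemma best_approx_orth:
  assumes min: "\<And>b. norm (x - W a) \<le> norm (x - W b)"
  shows "re_cinner (W b) (x - W a) = 0"
proof -
  define z where "z = x - W a"
  define c where "c = re_cinner (W b) z"
  define N where "N = (norm (W b))\<^sup>2"
  define t where "t = c / (N + 1)"
  have N: "N \<ge> 0"
    unfolding N_def by simp
  have "x - W (a + t *\<^sub>R b) = z - t *\<^sub>R W b"
    unfolding z_def by (simp add: W_add W_scaleR)
  then have "(norm (x - W (a + t *\<^sub>R b)))\<^sup>2 = (norm z)\<^sup>2 + t\<^sup>2 * N - 2 * t * c"
    unfolding N_def c_def
    by (simp add: power2_norm_diff re_cinner_scaleR_right re_cinner_commute[of z] power_mult_distrib)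
  moreover have "(norm z)\<^sup>2 \<le> (norm (x - W (a + t *\<^sub>R b)))\<^sup>2"
    unfolding z_def using min by (simp add: power_mono)
  moreover have "t\<^sup>2 * N - 2 * t * c = - (c\<^sup>2 * (N + 2) / (N + 1)\<^sup>2)"
  proof -
    have "N + 1 \<noteq> 0"
      using N by simp
    then show ?thesis
      unfolding t_def
      by (simp add: diff_divide_distrib[symmetric] divide_simps) (simp add: power2_eq_square algebra_simps)
  qed
  ultimately have "c\<^sup>2 * (N + 2) / (N + 1)\<^sup>2 \<le> 0"
    by linarith
  then have "c\<^sup>2 = 0"
    using N by (simp add: divide_le_0_iff mult_le_0_iff)
  then show ?thesis
    unfolding c_def z_def by simp
qed

text \<open>As the range of W is a complex subspace, orthogonality to it with respect to the
  real inner product re_cinner is the same as complex orthogonality.\<close>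

definition orth_range :: "'a \<Rightarrow> bool" where
  "orth_range d \<longleftrightarrow> (\<forall>b. re_cinner (W b) d = 0)"

definition adj :: "'a \<Rightarrow> 'a" where
  "adj x = (SOME a. orth_range (x - W a))"

lemma orth_range_adj: "orth_range (x - W (adj x))"
proof -
  obtain a where "\<forall>b. norm (x - W a) \<le> norm (x - W b)"
    using best_approx_exists by blast
  then have "orth_range (x - W a)"
    unfolding orth_range_def using best_approx_orth by blast
  then show ?thesis
    unfolding adj_def by (rule someI)
qed

lemma orth_range_add: "orth_range x \<Longrightarrow> orth_range y \<Longrightarrow> orth_range (x + y)"
  unfolding orth_range_def by (simp add: re_cinner_add_right)

lemma orth_range_diff: "orth_range x \<Longrightarrow> orth_range y \<Longrightarrow> orth_range (x - y)"
  unfolding orth_range_def by (simp add: re_cinner_diff_right)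

lemma orth_range_zero [simp]: "orth_range 0"
  unfolding orth_range_def by simp

lemma orth_range_scaleC:
  assumes "orth_range x"
  shows "orth_range (c *\<^sub>C x)"
proof (cases "c = 0")
  case False
  have "W b = c *\<^sub>C W (inverse c *\<^sub>C b)" for b
    using False by (simp add: W_scaleC scaleC_scaleC scaleC_one)
  then have "re_cinner (W b) (c *\<^sub>C x) = (cmod c)\<^sup>2 * re_cinner (W (inverse c *\<^sub>C b)) x" for b
    by (metis re_cinner_scaleC_scaleC)
  then show ?thesis
    using assms unfolding orth_range_def by simp
qed simp

lemma orth_range_W_eq_0: "orth_range (W a) \<Longrightarrow> W a = 0"
  unfolding orth_range_def by (metis power2_norm_eq_re_cinner zero_eq_power2 norm_eq_zero)

lemma adj_unique:
  assumes "orth_range (x - W a)"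
  shows "adj x = a"
proof -
  have "orth_range ((x - W a) - (x - W (adj x)))"
    using assms orth_range_adj by (rule orth_range_diff)
  moreover have "(x - W a) - (x - W (adj x)) = W (adj x - a)"
    by (simp add: W_diff)
  ultimately have "W (adj x - a) = 0"
    by (simp add: orth_range_W_eq_0)
  then show ?thesis
    using W_norm[of "adj x - a"] by simp
qed

lemma adj_W_add_orth_range: "orth_range d \<Longrightarrow> adj (W a + d) = a"
  by (rule adj_unique) simp

lemma adj_W [simp]: "adj (W a) = a"
  by (rule adj_unique) simp

lemma adj_add: "adj (x + y) = adj x + adj y"
proof (rule adj_unique)
  have "x + y - W (adj x + adj y) = (x - W (adj x)) + (y - W (adj y))"
    by (simp add: W_add algebra_simps)
  then show "orth_range (x + y - W (adj x + adj y))"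
    by (metis orth_range_add orth_range_adj)
qed

lemma adj_scaleC: "adj (c *\<^sub>C x) = c *\<^sub>C adj x"
proof (rule adj_unique)
  have "c *\<^sub>C x - W (c *\<^sub>C adj x) = c *\<^sub>C (x - W (adj x))"
    by (simp add: W_scaleC scaleC_diff_right)
  then show "orth_range (c *\<^sub>C x - W (c *\<^sub>C adj x))"
    by (simp add: orth_range_scaleC orth_range_adj)
qed

lemma adj_zero [simp]: "adj 0 = 0"
  using adj_W[of 0] by (simp add: W_zero)

lemma adj_pythagoras: "(norm (adj x))\<^sup>2 + (norm (x - W (adj x)))\<^sup>2 = (norm x)\<^sup>2"
  using pythagoras[of "W (adj x)" "x - W (adj x)"] orth_range_adj[of x]
  unfolding orth_range_def by (simp add: W_norm)

lemma orth_range_limit: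
  assumes lim: "X \<longlonglongrightarrow> d" and orth: "\<And>k. orth_range (X k)"
  shows "orth_range d"
proof -
  have "adj d = adj (d - X k)" for k
    using adj_add[of "d - X k" "X k"] adj_unique[of "X k" 0] orth[of k] by (simp add: W_zero)
  then have "norm (adj d) \<le> norm (d - X k)" for k
    using adj_pythagoras[of "d - X k"] by (metis le_add_same_cancel1 norm_ge_zero power2_le_imp_le zero_le_power2)
  moreover have "(\<lambda>k. d - X k) \<longlonglongrightarrow> 0"
    using tendsto_diff[OF tendsto_const[of d] lim] by simp
  then have "(\<lambda>k. norm (d - X k)) \<longlonglongrightarrow> 0"
    by (rule tendsto_norm_zero)
  ultimately have "adj d = 0"
    by (metis LIMSEQ_le_const norm_le_zero_iff)
  then show ?thesis
    using orth_range_adj[of d] by (simp add: W_zero)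
qed

end

section \<open>The sequence space l2\<close>

abbreviation l2dist :: "(nat \<Rightarrow> 'a::chilbert_space) \<Rightarrow> (nat \<Rightarrow> 'a) \<Rightarrow> real" where
  "l2dist f g \<equiv> l2norm (\<lambda>n. f n - g n)"

definition l2_Cauchy :: "(nat \<Rightarrow> nat \<Rightarrow> 'a::chilbert_space) \<Rightarrow> bool" where
  "l2_Cauchy X \<longleftrightarrow> (\<forall>e>0. \<exists>N. \<forall>m\<ge>N. \<forall>n\<ge>N. l2dist (X m) (X n) < e)"

definition trunc :: "(nat \<Rightarrow> 'a::zero) \<Rightarrow> nat \<Rightarrow> nat \<Rightarrow> 'a" where
  "trunc f n = (\<lambda>j. if j \<le> n then f j else 0)"

lemma mem_l2_iff: "f \<in> l2 \<longleftrightarrow> summable (\<lambda>n. (norm (f n))\<^sup>2)"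
  by (simp add: l2_def)

lemma l2_dominated:
  assumes g: "g \<in> l2" and le: "\<And>n. norm (f n) \<le> C * norm (g n)"
  shows "f \<in> l2"
proof -
  have "norm ((norm (f n))\<^sup>2) \<le> C\<^sup>2 * (norm (g n))\<^sup>2" for n
    using power_mono[OF le[of n]] by (simp add: power_mult_distrib)
  moreover have "summable (\<lambda>n. C\<^sup>2 * (norm (g n))\<^sup>2)"
    using g unfolding mem_l2_iff by (rule summable_mult)
  ultimately show ?thesis
    unfolding mem_l2_iff by (blast intro: summable_comparison_test'[where N = 0])
qed

lemma l2_zero: "(\<lambda>n. 0) \<in> l2"
  unfolding mem_l2_iff by simp

lemma l2_add:
  assumes "f \<in> l2" "g \<in> l2"
  shows "(\<lambda>n. f n + g n) \<in> l2"
proof -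
  have sq_le: "(norm (a + b))\<^sup>2 \<le> 2 * (norm a)\<^sup>2 + 2 * (norm b)\<^sup>2" for a b :: 'a
  proof -
    have "(norm (a + b))\<^sup>2 \<le> (norm a + norm b)\<^sup>2"
      using norm_triangle_ineq[of a b] by (rule power_mono) simp
    also have "\<dots> \<le> 2 * (norm a)\<^sup>2 + 2 * (norm b)\<^sup>2"
      using zero_le_power2[of "norm a - norm b"] unfolding power2_sum power2_diff by linarith
    finally show ?thesis .
  qed
  have "summable (\<lambda>n. 2 * (norm (f n))\<^sup>2 + 2 * (norm (g n))\<^sup>2)"
    using assms unfolding mem_l2_iff by (intro summable_add summable_mult)
  then show ?thesis
    unfolding mem_l2_iff by (rule summable_comparison_test'[where N = 0]) (simp add: sq_le)
qed

lemma l2_diff: "f \<in> l2 \<Longrightarrow> g \<in> l2 \<Longrightarrow> (\<lambda>n. f n - g n) \<in> l2"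
  using l2_add[of f "\<lambda>n. - g n"] by (simp add: mem_l2_iff)

lemma l2_scaleC: "f \<in> l2 \<Longrightarrow> (\<lambda>n. c *\<^sub>C (f n::'a::chilbert_space)) \<in> l2"
  by (erule l2_dominated[where C = "cmod c"]) (simp add: norm_scaleC)

lemma l2_finite_support: "(\<And>j. j > N \<Longrightarrow> f j = 0) \<Longrightarrow> f \<in> l2"
  unfolding mem_l2_iff by (rule summable_finite[of "{..N}"]) auto

lemma trunc_l2: "trunc (f::nat \<Rightarrow> 'a::chilbert_space) n \<in> l2"
  by (rule l2_finite_support[of n]) (simp add: trunc_def)

lemma emb_l2: "emb x \<in> l2"
  by (rule l2_finite_support[of 0]) (simp add: emb_def)

lemma l2norm_nonneg: "f \<in> l2 \<Longrightarrow> l2norm f \<ge> 0"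
  unfolding l2norm_def mem_l2_iff by (simp add: suminf_nonneg)

lemma power2_l2norm: "f \<in> l2 \<Longrightarrow> (l2norm f)\<^sup>2 = (\<Sum>n. (norm (f n))\<^sup>2)"
  unfolding l2norm_def mem_l2_iff by (simp add: suminf_nonneg)

lemma partial_sum_le_power2_l2norm: "f \<in> l2 \<Longrightarrow> (\<Sum>n<N. (norm (f n))\<^sup>2) \<le> (l2norm f)\<^sup>2"
  unfolding power2_l2norm by (rule sum_le_suminf) (auto simp: mem_l2_iff)

lemma norm_le_l2norm:
  assumes "f \<in> l2"
  shows "norm (f j) \<le> l2norm f"
proof -
  have "(\<Sum>n\<in>{j}. (norm (f n))\<^sup>2) \<le> (\<Sum>n. (norm (f n))\<^sup>2)"
    using assms unfolding mem_l2_iff by (intro sum_le_suminf) auto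
  then have "(norm (f j))\<^sup>2 \<le> (l2norm f)\<^sup>2"
    using assms by (simp add: power2_l2norm)
  then show ?thesis
    using assms l2norm_nonneg by (blast intro: power2_le_imp_le)
qed

lemma l2norm_eq_0: "f \<in> l2 \<Longrightarrow> l2norm f = 0 \<Longrightarrow> f = (\<lambda>n. 0)"
  using norm_le_l2norm[of f] by (metis norm_le_zero_iff)

lemma l2norm_le_if_partial_sums_le:
  assumes "f \<in> l2" and "\<And>N. (\<Sum>n<N. (norm (f n))\<^sup>2) \<le> B\<^sup>2" and "B \<ge> 0"
  shows "l2norm f \<le> B"
proof -
  have "(l2norm f)\<^sup>2 \<le> B\<^sup>2"
    unfolding power2_l2norm[OF assms(1)] using assms(1,2) unfolding mem_l2_iff
    by (intro suminf_le_const)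
  then show ?thesis
    using assms(3) by (rule power2_le_imp_le)
qed

lemma l2norm_triangle:
  assumes f: "f \<in> l2" and g: "g \<in> l2"
  shows "l2norm (\<lambda>n. f n + g n) \<le> l2norm f + l2norm g"
proof (rule l2norm_le_if_partial_sums_le[OF l2_add[OF f g]])
  have partial_le: "L2_set (\<lambda>n. norm (h n)) {..<N} \<le> l2norm h" if "h \<in> l2" for h :: "nat \<Rightarrow> 'a" and N
    unfolding L2_set_def using partial_sum_le_power2_l2norm[OF that] l2norm_nonneg[OF that]
    by (simp add: real_le_lsqrt)
  fix N
  have "L2_set (\<lambda>n. norm (f n + g n)) {..<N} \<le> L2_set (\<lambda>n. norm (f n) + norm (g n)) {..<N}"
    by (rule L2_set_mono) (auto simp: norm_triangle_ineq)
  also have "\<dots> \<le> L2_set (\<lambda>n. norm (f n)) {..<N} + L2_set (\<lambda>n. norm (g n)) {..<N}"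
    by (rule L2_set_triangle_ineq)
  also have "\<dots> \<le> l2norm f + l2norm g"
    using partial_le[OF f] partial_le[OF g] by (rule add_mono)
  finally show "(\<Sum>n<N. (norm (f n + g n))\<^sup>2) \<le> (l2norm f + l2norm g)\<^sup>2"
    unfolding L2_set_def by (rule sqrt_le_D)
next
  show "0 \<le> l2norm f + l2norm g"
    using l2norm_nonneg[OF f] l2norm_nonneg[OF g] by simp
qed

lemma l2dist_commute: "l2dist f g = l2dist g f"
  unfolding l2norm_def by (simp add: norm_minus_commute)

lemma l2dist_triangle:
  "f \<in> l2 \<Longrightarrow> g \<in> l2 \<Longrightarrow> h \<in> l2 \<Longrightarrow> l2dist f h \<le> l2dist f g + l2dist g h"
  using l2norm_triangle[of "\<lambda>n. f n - g n" "\<lambda>n. g n - h n"] by (simp add: l2_diff)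

lemma l2norm_cong: "(\<And>n. norm (f n) = norm (g n)) \<Longrightarrow> l2norm f = l2norm g"
  unfolding l2norm_def by simp

lemma l2norm_emb: "l2norm (emb x) = norm x"
proof -
  have "(\<Sum>n. (norm (emb x n))\<^sup>2) = (norm x)\<^sup>2"
    by (subst suminf_finite[of "{0}"]) (auto simp: emb_def)
  then show ?thesis
    unfolding l2norm_def by simp
qed

lemma l2norm_tendsto:
  assumes X: "\<And>n. X n \<in> l2" and L: "L \<in> l2" and lim: "(\<lambda>n. l2dist (X n) L) \<longlonglongrightarrow> 0"
  shows "(\<lambda>n. l2norm (X n)) \<longlonglongrightarrow> l2norm L"
proof -
  have "\<bar>l2norm (X n) - l2norm L\<bar> \<le> l2dist (X n) L" for n
    using l2norm_triangle[OF l2_diff[OF X[of n] L] L] l2norm_triangle[OF l2_diff[OF L X[of n]] X[of n]]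
      l2dist_commute[of L "X n"]
    by simp
  then have "(\<lambda>n. l2norm (X n) - l2norm L) \<longlonglongrightarrow> 0"
    by (intro Lim_null_comparison[OF always_eventually lim]) simp
  then show ?thesis
    by (simp add: LIM_zero_iff)
qed

lemma l2_limit_coord:
  assumes "\<And>k. X k \<in> l2" "f \<in> l2" and lim: "(\<lambda>k. l2dist (X k) f) \<longlonglongrightarrow> 0"
  shows "(\<lambda>k. X k j) \<longlonglongrightarrow> f j"
proof -
  have "\<forall>k. norm (X k j - f j) \<le> l2dist (X k) f"
    using norm_le_l2norm[OF l2_diff[OF assms(1,2)]] by blast
  then have "(\<lambda>k. X k j - f j) \<longlonglongrightarrow> 0"
    by (rule Lim_null_comparison[OF always_eventually lim])
  then show ?thesis
    by (simp add: LIM_zero_iff)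
qed

lemma l2_limit_unique:
  assumes "\<And>k. X k \<in> l2" "f \<in> l2" "g \<in> l2"
    and "(\<lambda>k. l2dist (X k) f) \<longlonglongrightarrow> 0" "(\<lambda>k. l2dist (X k) g) \<longlonglongrightarrow> 0"
  shows "f = g"
proof
  fix j
  show "f j = g j"
    using l2_limit_coord[OF assms(1,2,4)] l2_limit_coord[OF assms(1,3,5)] by (rule LIMSEQ_unique)
qed

lemma l2dist_trunc_tendsto:
  assumes "f \<in> l2"
  shows "(\<lambda>n. l2dist f (trunc f n)) \<longlonglongrightarrow> 0"
proof -
  let ?a = "\<lambda>j. (norm (f j))\<^sup>2"
  have a: "summable ?a"
    using assms unfolding mem_l2_iff .
  have "(\<lambda>j. (norm (f j - trunc f n j))\<^sup>2) = (\<lambda>j. if j \<le> n then 0 else ?a j)" for n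
    unfolding trunc_def by auto
  moreover have "(\<Sum>j. if j \<le> n then 0 else ?a j) = suminf ?a - (\<Sum>j<Suc n. ?a j)" for n
  proof -
    have "summable (\<lambda>j. if j \<le> n then 0 else ?a j)"
      by (rule summable_comparison_test'[OF a, where N = 0]) simp
    then show ?thesis
      using suminf_split_initial_segment[of "\<lambda>j. if j \<le> n then 0 else ?a j" "Suc n"]
        suminf_minus_initial_segment[OF a, of "Suc n"]
      by simp
  qed
  moreover have "(\<lambda>n. suminf ?a - (\<Sum>j<Suc n. ?a j)) \<longlonglongrightarrow> suminf ?a - suminf ?a"
    using LIMSEQ_Suc[OF summable_LIMSEQ[OF a]] by (intro tendsto_intros)
  ultimately have "(\<lambda>n. \<Sum>j. (norm (f j - trunc f n j))\<^sup>2) \<longlonglongrightarrow> 0"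
    by simp
  then show ?thesis
    unfolding l2norm_def using tendsto_real_sqrt by fastforce
qed

lemma emb_add: "emb (x + y) = (\<lambda>j. emb x j + emb y j)"
  and emb_scaleC: "emb (c *\<^sub>C x) = (\<lambda>j. c *\<^sub>C emb x j)"
  and emb_zero: "emb 0 = (\<lambda>j. 0)"
  unfolding emb_def by auto

lemma projH_emb: "projH (emb x) = x"
  unfolding projH_def emb_def by simp

lemma l2_convergent_imp_l2_Cauchy:
  assumes X: "\<And>k. X k \<in> l2" and f: "f \<in> l2" and lim: "(\<lambda>k. l2dist (X k) f) \<longlonglongrightarrow> 0"
  shows "l2_Cauchy X"
  unfolding l2_Cauchy_def
proof (intro allI impI)
  fix e :: real
  assume "e > 0"
  then obtain N where "\<forall>n\<ge>N. norm (l2dist (X n) f - 0) < e / 2"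
    using LIMSEQ_D[OF lim, of "e / 2"] by auto
  then have N: "l2dist (X n) f < e / 2" if "n \<ge> N" for n
    using that by auto
  have "l2dist (X m) (X n) < e" if "m \<ge> N" "n \<ge> N" for m n
    using l2dist_triangle[OF X f X, of m n] l2dist_commute[of f "X n"] N[OF that(1)] N[OF that(2)]
    by simp
  then show "\<exists>N. \<forall>m\<ge>N. \<forall>n\<ge>N. l2dist (X m) (X n) < e"
    by blast
qed

lemma l2_Cauchy_trunc: "f \<in> l2 \<Longrightarrow> l2_Cauchy (trunc f)"
  using l2dist_trunc_tendsto[of f] l2dist_commute[of f]
  by (intro l2_convergent_imp_l2_Cauchy[OF trunc_l2]) simp_all

lemma l2_Cauchy_coord:
  assumes X: "\<And>k. X k \<in> l2" and C: "l2_Cauchy X"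
  shows "Cauchy (\<lambda>k. X k j)"
proof (rule metric_CauchyI)
  fix e :: real
  assume "e > 0"
  then obtain N where "\<forall>m\<ge>N. \<forall>n\<ge>N. l2dist (X m) (X n) < e"
    using C unfolding l2_Cauchy_def by blast
  moreover have "norm (X m j - X n j) \<le> l2dist (X m) (X n)" for m n
    using norm_le_l2norm[OF l2_diff[OF X X]] .
  ultimately show "\<exists>N. \<forall>m\<ge>N. \<forall>n\<ge>N. dist (X m j) (X n j) < e"
    by (metis dist_norm order.strict_trans1)
qed

lemma l2dist_le_of_coord_limit:
  assumes X: "\<And>k. X k \<in> l2" and conv: "\<And>j. (\<lambda>k. X k j) \<longlonglongrightarrow> f j" and "e \<ge> 0"
    and close: "\<And>n. n \<ge> N \<Longrightarrow> l2dist (X m) (X n) \<le> e"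
  shows "(\<lambda>j. X m j - f j) \<in> l2" and "l2dist (X m) f \<le> e"
proof -
  have partial: "(\<Sum>j<M. (norm (X m j - f j))\<^sup>2) \<le> e\<^sup>2" for M
  proof (rule LIMSEQ_le_const2)
    show "(\<lambda>n. \<Sum>j<M. (norm (X m j - X n j))\<^sup>2) \<longlonglongrightarrow> (\<Sum>j<M. (norm (X m j - f j))\<^sup>2)"
      by (intro tendsto_intros conv)
    have "(\<Sum>j<M. (norm (X m j - X n j))\<^sup>2) \<le> e\<^sup>2" if "n \<ge> N" for n
      using partial_sum_le_power2_l2norm[OF l2_diff[OF X[of m] X[of n]], of M]
        power_mono[OF close[OF that] l2norm_nonneg[OF l2_diff[OF X X]], of 2]
      by linarith
    then show "\<exists>N. \<forall>n\<ge>N. (\<Sum>j<M. (norm (X m j - X n j))\<^sup>2) \<le> e\<^sup>2"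
      by blast
  qed
  show l2: "(\<lambda>j. X m j - f j) \<in> l2"
    unfolding mem_l2_iff by (rule bounded_imp_summable[where B = "e\<^sup>2"])
      (simp_all add: partial[of "Suc _", unfolded lessThan_Suc_atMost])
  show "l2dist (X m) f \<le> e"
    by (rule l2norm_le_if_partial_sums_le[OF l2 partial \<open>e \<ge> 0\<close>])
qed

definition l2_lim :: "(nat \<Rightarrow> nat \<Rightarrow> 'a::chilbert_space) \<Rightarrow> nat \<Rightarrow> 'a" where
  "l2_lim X = (\<lambda>j. lim (\<lambda>k. X k j))"

lemma l2_complete:
  assumes X: "\<And>k. X k \<in> l2" and C: "l2_Cauchy X"
  shows "l2_lim X \<in> l2" and "(\<lambda>k. l2dist (X k) (l2_lim X)) \<longlonglongrightarrow> 0"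
proof -
  have conv: "(\<lambda>k. X k j) \<longlonglongrightarrow> l2_lim X j" for j
    unfolding l2_lim_def using l2_Cauchy_coord[OF X C, of j] by (simp add: Cauchy_convergent_iff convergent_LIMSEQ_iff)
  have tail: "(\<lambda>j. X m j - l2_lim X j) \<in> l2 \<and> l2dist (X m) (l2_lim X) \<le> e"
    if "e > 0" "\<forall>m\<ge>N. \<forall>n\<ge>N. l2dist (X m) (X n) < e" "m \<ge> N" for e N m
    using l2dist_le_of_coord_limit[OF X conv, of e N m] that by (simp add: less_imp_le)
  obtain N where "\<forall>m\<ge>N. \<forall>n\<ge>N. l2dist (X m) (X n) < 1"
    using C unfolding l2_Cauchy_def by (meson zero_less_one)
  then have "(\<lambda>j. X N j - l2_lim X j) \<in> l2"
    using tail[of 1 N N] by simp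
  from l2_diff[OF X[of N] this] show "l2_lim X \<in> l2"
    by simp
  show "(\<lambda>k. l2dist (X k) (l2_lim X)) \<longlonglongrightarrow> 0"
  proof (rule LIMSEQ_I)
    fix r :: real
    assume "r > 0"
    then obtain N where "\<forall>m\<ge>N. \<forall>n\<ge>N. l2dist (X m) (X n) < r / 2"
      using C unfolding l2_Cauchy_def by (meson half_gt_zero)
    then have "norm (l2dist (X k) (l2_lim X) - 0) < r" if "k \<ge> N" for k
      using tail[of "r / 2" N k] that \<open>r > 0\<close> l2norm_nonneg by fastforce
    then show "\<exists>N. \<forall>k\<ge>N. norm (l2dist (X k) (l2_lim X) - 0) < r"
      by blast
  qed
qed

lemma merge_first_two:
  fixes a b :: "nat \<Rightarrow> real"
  assumes b0: "b 0 = a 0 + a 1" and b_Suc: "\<And>n. b (Suc n) = a (Suc (Suc n))"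
  shows "summable b \<longleftrightarrow> summable a" and "summable a \<Longrightarrow> suminf b = suminf a"
proof -
  have shift: "(\<lambda>n. b (n + 1)) = (\<lambda>n. a (n + 2))"
    using b_Suc by (simp add: numeral_2_eq_2)
  show summable: "summable b \<longleftrightarrow> summable a"
    using summable_iff_shift[of b 1] summable_iff_shift[of a 2] shift by simp
  assume a: "summable a"
  then show "suminf b = suminf a"
    using suminf_split_initial_segment[of b 1] suminf_split_initial_segment[OF a, of 2] shift b0 summable
    by (simp add: numeral_2_eq_2)
qed

section \<open>The minimal unitary extension of an isometry\<close>

context isometry
begin

definition K :: "(nat \<Rightarrow> 'a) set" where
  "K = {f \<in> l2. \<forall>n. n \<noteq> 0 \<longrightarrow> orth_range (f n)}"

definition Wext :: "(nat \<Rightarrow> 'a) \<Rightarrow> nat \<Rightarrow> 'a" where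
  "Wext f = (\<lambda>n. if n = 0 then W (f 0) + f 1 else f (Suc n))"

definition Wext_inv :: "(nat \<Rightarrow> 'a) \<Rightarrow> nat \<Rightarrow> 'a" where
  "Wext_inv f = (\<lambda>n. if n = 0 then adj (f 0) else if n = 1 then f 0 - W (adj (f 0)) else f (n - 1))"

lemma K_l2: "f \<in> K \<Longrightarrow> f \<in> l2"
  and K_orth_range: "f \<in> K \<Longrightarrow> n \<noteq> 0 \<Longrightarrow> orth_range (f n)"
  unfolding K_def by simp_all

lemma K_I: "f \<in> l2 \<Longrightarrow> (\<And>n. n \<noteq> 0 \<Longrightarrow> orth_range (f n)) \<Longrightarrow> f \<in> K"
  unfolding K_def by simp

lemma emb_in_K: "emb x \<in> K"
  by (rule K_I[OF emb_l2]) (simp add: emb_def)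

lemma K_zero: "(\<lambda>n. 0) \<in> K"
  by (rule K_I[OF l2_zero]) simp

lemma trunc_in_K: "f \<in> K \<Longrightarrow> trunc f n \<in> K"
  by (rule K_I[OF trunc_l2]) (simp add: trunc_def K_orth_range)

lemma K_add: "f \<in> K \<Longrightarrow> g \<in> K \<Longrightarrow> (\<lambda>n. f n + g n) \<in> K"
  by (rule K_I[OF l2_add[OF K_l2 K_l2]]) (simp_all add: orth_range_add K_orth_range)

lemma K_diff: "f \<in> K \<Longrightarrow> g \<in> K \<Longrightarrow> (\<lambda>n. f n - g n) \<in> K"
  by (rule K_I[OF l2_diff[OF K_l2 K_l2]]) (simp_all add: orth_range_diff K_orth_range)

lemma K_scaleC: "f \<in> K \<Longrightarrow> (\<lambda>n. c *\<^sub>C f n) \<in> K"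
  by (rule K_I[OF l2_scaleC[OF K_l2]]) (simp_all add: orth_range_scaleC K_orth_range)

lemma K_limit:
  assumes X: "\<And>k. X k \<in> K" and f: "f \<in> l2" and lim: "(\<lambda>k. l2dist (X k) f) \<longlonglongrightarrow> 0"
  shows "f \<in> K"
proof (rule K_I[OF f])
  fix n :: nat
  assume "n \<noteq> 0"
  show "orth_range (f n)"
    by (rule orth_range_limit[OF l2_limit_coord[OF K_l2[OF X] f lim]])
      (rule K_orth_range[OF X \<open>n \<noteq> 0\<close>])
qed

lemma closed_subspace_K: "closed_subspace_l2 K"
  unfolding closed_subspace_l2_def using K_l2 K_zero K_add K_scaleC K_limit by blast

lemma Wext_add: "Wext (\<lambda>n. f n + g n) = (\<lambda>n. Wext f n + Wext g n)"
  unfolding Wext_def by (auto simp: W_add algebra_simps)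

lemma Wext_scaleC: "Wext (\<lambda>n. c *\<^sub>C f n) = (\<lambda>n. c *\<^sub>C Wext f n)"
  unfolding Wext_def by (auto simp: W_scaleC scaleC_add_right)

lemma Wext_emb: "Wext (emb x) = emb (W x)"
  unfolding Wext_def emb_def by auto

lemma Wext_coord_tendsto:
  assumes "\<And>j. (\<lambda>n. X n j) \<longlonglongrightarrow> f j"
  shows "(\<lambda>n. Wext (X n) j) \<longlonglongrightarrow> Wext f j"
  unfolding Wext_def using assms by (auto intro!: tendsto_add bounded_linear.tendsto[OF W_bounded_linear])

lemma Wext_inv_add: "Wext_inv (\<lambda>n. f n + g n) = (\<lambda>n. Wext_inv f n + Wext_inv g n)"
  unfolding Wext_inv_def by (auto simp: W_add adj_add algebra_simps)

lemma Wext_inv_scaleC: "Wext_inv (\<lambda>n. c *\<^sub>C f n) = (\<lambda>n. c *\<^sub>C Wext_inv f n)"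
  unfolding Wext_inv_def by (auto simp: W_scaleC adj_scaleC scaleC_diff_right)

lemma Wext_inv_emb_W: "Wext_inv (emb (W x)) = emb x"
  unfolding Wext_inv_def emb_def by auto

lemma Wext_inv_zero: "Wext_inv (\<lambda>n. 0) = (\<lambda>n. 0)"
  unfolding Wext_inv_def by (auto simp: W_zero)

lemma Wext_Wext_inv: "Wext (Wext_inv f) = f"
  unfolding Wext_def Wext_inv_def by auto

lemma Wext_inv_Wext:
  assumes "f \<in> K"
  shows "Wext_inv (Wext f) = f"
proof -
  have "adj (Wext f 0) = f 0"
    unfolding Wext_def using adj_W_add_orth_range K_orth_range[OF assms, of 1] by simp
  moreover have "Wext f (n - 1) = f n" if "n > 1" for n
    using that by (simp add: Wext_def)
  ultimately show ?thesis
    unfolding Wext_inv_def by (simp add: fun_eq_iff Wext_def)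
qed

lemma norms_Wext:
  assumes "f \<in> K"
  shows "(norm (Wext f 0))\<^sup>2 = (norm (f 0))\<^sup>2 + (norm (f 1))\<^sup>2"
    and "norm (Wext f (Suc n)) = norm (f (Suc (Suc n)))"
  using pythagoras[of "W (f 0)" "f 1"] K_orth_range[OF assms, of 1]
  unfolding Wext_def orth_range_def by (simp_all add: W_norm)

lemma norms_Wext_inv:
  "(norm (f 0))\<^sup>2 = (norm (Wext_inv f 0))\<^sup>2 + (norm (Wext_inv f 1))\<^sup>2"
  "norm (f (Suc n)) = norm (Wext_inv f (Suc (Suc n)))"
  unfolding Wext_inv_def using adj_pythagoras[of "f 0"] by simp_all

lemma Wext_in_K:
  assumes f: "f \<in> K"
  shows "Wext f \<in> K"
proof (rule K_I)
  show "Wext f \<in> l2"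
    using merge_first_two(1)[of "\<lambda>n. (norm (Wext f n))\<^sup>2" "\<lambda>n. (norm (f n))\<^sup>2"] norms_Wext[OF f] K_l2[OF f]
    unfolding mem_l2_iff by simp
  show "orth_range (Wext f n)" if "n \<noteq> 0" for n
    using that K_orth_range[OF f] by (simp add: Wext_def)
qed

lemma l2norm_Wext: "f \<in> K \<Longrightarrow> l2norm (Wext f) = l2norm f"
  using merge_first_two(2)[of "\<lambda>n. (norm (Wext f n))\<^sup>2" "\<lambda>n. (norm (f n))\<^sup>2"] norms_Wext[of f]
  unfolding l2norm_def by (simp add: K_l2[unfolded mem_l2_iff])

lemma Wext_inv_in_K:
  assumes f: "f \<in> K"
  shows "Wext_inv f \<in> K"
proof (rule K_I)
  show "Wext_inv f \<in> l2"
    using merge_first_two(1)[of "\<lambda>n. (norm (f n))\<^sup>2" "\<lambda>n. (norm (Wext_inv f n))\<^sup>2"] norms_Wext_inv[of f] K_l2[OF f]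
    unfolding mem_l2_iff by simp
  show "orth_range (Wext_inv f n)" if "n \<noteq> 0" for n
    using that K_orth_range[OF f] orth_range_adj by (simp add: Wext_inv_def)
qed

lemma l2norm_Wext_inv: "f \<in> K \<Longrightarrow> l2norm (Wext_inv f) = l2norm f"
  using merge_first_two[of "\<lambda>n. (norm (f n))\<^sup>2" "\<lambda>n. (norm (Wext_inv f n))\<^sup>2"] norms_Wext_inv[of f]
  unfolding l2norm_def by (simp add: K_l2[unfolded mem_l2_iff])

end

lemma funpow_add_pointwise:
  fixes F :: "(nat \<Rightarrow> 'a::plus) \<Rightarrow> nat \<Rightarrow> 'a"
  assumes "\<And>f g. F (\<lambda>n. f n + g n) = (\<lambda>n. F f n + F g n)"
  shows "(F ^^ k) (\<lambda>n. f n + g n) = (\<lambda>n. (F ^^ k) f n + (F ^^ k) g n)"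
  by (induction k) (simp_all add: assms)

lemma funpow_scaleC_pointwise:
  fixes F :: "(nat \<Rightarrow> 'a::chilbert_space) \<Rightarrow> nat \<Rightarrow> 'a"
  assumes "\<And>f. F (\<lambda>n. c *\<^sub>C f n) = (\<lambda>n. c *\<^sub>C F f n)"
  shows "(F ^^ k) (\<lambda>n. c *\<^sub>C f n) = (\<lambda>n. c *\<^sub>C (F ^^ k) f n)"
  by (induction k) (simp_all add: assms)

section \<open>Dilation of q-commuting isometries\<close>

locale q_commuting_isometries =
  fixes V1 V2 Q :: "'a::chilbert_space \<Rightarrow> 'a" and q :: complex
  assumes V1: "isometry_op V1" and V2: "isometry_op V2" and Q: "unitary_op Q"
    and commute: "\<And>x. V2 (V1 x) = Q (V1 (V2 x))" and q: "norm q = 1"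
begin

sublocale isometry "\<lambda>x. V1 (V2 x)"
  by unfold_locales (rule isometry_op_comp[OF V1 V2])

lemmas Q_isometry = unitary_op_isometry_op[OF Q]

lemma V1_Q_W: "V1 (Q (V1 (V2 x))) = V1 (V2 (V1 x))"
  by (simp add: commute)

definition Qbar :: "(nat \<Rightarrow> 'a) \<Rightarrow> nat \<Rightarrow> 'a" where
  "Qbar f = (\<lambda>n. if n = 0 then Q (f 0) else q *\<^sub>C f n)"

lemma Qbar_in_K:
  assumes f: "f \<in> K"
  shows "Qbar f \<in> K"
proof (rule K_I)
  show "Qbar f \<in> l2"
    by (rule l2_dominated[where C = 1, OF K_l2[OF f]])
      (simp add: Qbar_def isometry_op_norm[OF Q_isometry] norm_scaleC q)
  show "orth_range (Qbar f n)" if "n \<noteq> 0" for n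
    using that by (simp add: Qbar_def orth_range_scaleC K_orth_range[OF f])
qed

lemma l2norm_Qbar: "l2norm (Qbar f) = l2norm f"
  by (rule l2norm_cong) (simp add: Qbar_def isometry_op_norm[OF Q_isometry] norm_scaleC q)

lemma Qbar_add: "Qbar (\<lambda>n. f n + g n) = (\<lambda>n. Qbar f n + Qbar g n)"
  unfolding Qbar_def by (auto simp: isometry_op_add[OF Q_isometry] scaleC_add_right)

lemma Qbar_scaleC: "Qbar (\<lambda>n. c *\<^sub>C f n) = (\<lambda>n. c *\<^sub>C Qbar f n)"
  unfolding Qbar_def by (auto simp: isometry_op_scaleC[OF Q_isometry] scaleC_scaleC mult.commute)

lemma Qbar_emb: "Qbar (emb h) = emb (Q h)"
  unfolding Qbar_def emb_def by auto

lemma Qbar_off_H: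
  assumes "f 0 = 0"
  shows "Qbar f = (\<lambda>n. q *\<^sub>C f n)"
  using assms unfolding Qbar_def by (auto simp: isometry_op_zero[OF Q_isometry])

lemma Qbar_onto:
  assumes g: "g \<in> K"
  shows "\<exists>r\<in>K. Qbar r = g"
proof -
  define r where "r = (\<lambda>n. if n = 0 then inv Q (g 0) else inverse q *\<^sub>C g n)"
  have Q_inv: "Q (inv Q y) = y" for y
    using unitary_op_surj[OF Q] by (simp add: surj_f_inv_f)
  have "r \<in> l2"
    using isometry_op_norm[OF Q_isometry, of "inv Q _"]
    by (intro l2_dominated[where C = 1, OF K_l2[OF g]]) (simp add: r_def Q_inv norm_scaleC q norm_inverse)
  then have "r \<in> K"
    by (rule K_I) (simp add: r_def orth_range_scaleC K_orth_range[OF g])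
  moreover have "Qbar r = g"
  proof -
    have "q \<noteq> 0"
      using q by auto
    then show ?thesis
      by (auto simp: fun_eq_iff Qbar_def r_def Q_inv scaleC_scaleC scaleC_one)
  qed
  ultimately show ?thesis
    by blast
qed

lemma unitary_on_Qbar: "unitary_on K Qbar"
  unfolding unitary_on_def using Qbar_in_K Qbar_onto Qbar_add Qbar_scaleC l2norm_Qbar by blast

definition QWext :: "(nat \<Rightarrow> 'a) \<Rightarrow> nat \<Rightarrow> 'a" where
  "QWext f = Qbar (Wext f)"

lemma QWext_in_K: "f \<in> K \<Longrightarrow> QWext f \<in> K"
  unfolding QWext_def by (intro Qbar_in_K Wext_in_K)

lemma l2norm_QWext: "f \<in> K \<Longrightarrow> l2norm (QWext f) = l2norm f"
  unfolding QWext_def by (simp add: l2norm_Qbar l2norm_Wext)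

lemma QWext_add: "QWext (\<lambda>n. f n + g n) = (\<lambda>n. QWext f n + QWext g n)"
  unfolding QWext_def by (simp add: Wext_add Qbar_add)

lemma QWext_scaleC: "QWext (\<lambda>n. c *\<^sub>C f n) = (\<lambda>n. c *\<^sub>C QWext f n)"
  unfolding QWext_def by (simp add: Wext_scaleC Qbar_scaleC)

lemma QWext_pow_in_K: "f \<in> K \<Longrightarrow> (QWext ^^ k) f \<in> K"
  by (induction k) (simp_all add: QWext_in_K)

lemma l2norm_QWext_pow: "f \<in> K \<Longrightarrow> l2norm ((QWext ^^ k) f) = l2norm f"
  by (induction k) (simp_all add: l2norm_QWext QWext_pow_in_K)

lemma QWext_pow_Suc: "((QWext ^^ n) f) (Suc j) = q ^ n *\<^sub>C f (Suc j + n)"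
  by (induction n arbitrary: j) (simp_all add: QWext_def Qbar_def Wext_def scaleC_scaleC scaleC_one)

lemma QWext_pow_finite_support:
  assumes "\<And>j. j > n \<Longrightarrow> g j = 0"
  shows "(QWext ^^ n) g = emb (((QWext ^^ n) g) 0)"
proof
  fix j
  show "(QWext ^^ n) g j = emb (((QWext ^^ n) g) 0) j"
    by (cases j) (simp_all add: emb_def QWext_pow_Suc assms)
qed

lemma Wext_inv_pow_in_K: "f \<in> K \<Longrightarrow> (Wext_inv ^^ k) f \<in> K"
  by (induction k) (simp_all add: Wext_inv_in_K)

lemma Wext_inv_pow_zero: "(Wext_inv ^^ k) (\<lambda>n. 0) = (\<lambda>n. 0)"
  by (induction k) (simp_all add: Wext_inv_zero)

lemmas Wext_inv_pow_add = funpow_add_pointwise[where F = Wext_inv, OF Wext_inv_add]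
  and Wext_inv_pow_scaleC = funpow_scaleC_pointwise[where F = Wext_inv, OF Wext_inv_scaleC]
  and QWext_pow_add = funpow_add_pointwise[where F = QWext, OF QWext_add]
  and QWext_pow_scaleC = funpow_scaleC_pointwise[where F = QWext, OF QWext_scaleC]

lemma l2norm_Wext_inv_pow: "f \<in> K \<Longrightarrow> l2norm ((Wext_inv ^^ k) f) = l2norm f"
  by (induction k) (simp_all add: l2norm_Wext_inv Wext_inv_pow_in_K)

definition U1_approx :: "(nat \<Rightarrow> 'a) \<Rightarrow> nat \<Rightarrow> nat \<Rightarrow> 'a" where
  "U1_approx f n = (Wext_inv ^^ n) (emb (V1 (((QWext ^^ n) f) 0)))"

lemma U1_approx_Suc:
  "U1_approx f (Suc n) =
     (\<lambda>j. U1_approx f n j + q ^ n *\<^sub>C (Wext_inv ^^ Suc n) (emb (V1 (Q (f (Suc n))))) j)"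
proof -
  let ?h = "((QWext ^^ n) f) 0"
  have "((QWext ^^ Suc n) f) 0 = Q (V1 (V2 ?h) + q ^ n *\<^sub>C f (Suc n))"
    using QWext_pow_Suc[of n f 0] by (simp add: QWext_def Qbar_def Wext_def)
  then have "V1 (((QWext ^^ Suc n) f) 0) = V1 (V2 (V1 ?h)) + q ^ n *\<^sub>C V1 (Q (f (Suc n)))"
    using V1_Q_W by (simp add: isometry_op_add[OF V1] isometry_op_scaleC[OF V1]
        isometry_op_add[OF Q_isometry] isometry_op_scaleC[OF Q_isometry])
  then have "U1_approx f (Suc n) =
      (Wext_inv ^^ Suc n) (\<lambda>j. emb (V1 (V2 (V1 ?h))) j + q ^ n *\<^sub>C emb (V1 (Q (f (Suc n)))) j)"
    unfolding U1_approx_def by (simp add: emb_add emb_scaleC)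
  also have "\<dots> = (\<lambda>j. (Wext_inv ^^ Suc n) (emb (V1 (V2 (V1 ?h)))) j
      + q ^ n *\<^sub>C (Wext_inv ^^ Suc n) (emb (V1 (Q (f (Suc n))))) j)"
    by (simp only: Wext_inv_pow_add Wext_inv_pow_scaleC)
  also have "(Wext_inv ^^ Suc n) (emb (V1 (V2 (V1 ?h)))) = U1_approx f n"
    unfolding U1_approx_def funpow_Suc_right o_apply Wext_inv_emb_W ..
  finally show ?thesis .
qed

lemma U1_approx_cong: "(\<And>j. j \<le> n \<Longrightarrow> f j = g j) \<Longrightarrow> U1_approx f n = U1_approx g n"
proof (induction n)
  case 0
  then show ?case
    by (simp add: U1_approx_def)
next
  case (Suc n)
  then show ?case
    by (simp add: U1_approx_Suc)
qed

lemma U1_approx_stable: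
  assumes "\<And>j. j > m \<Longrightarrow> f j = 0"
  shows "U1_approx f (m + k) = U1_approx f m"
proof (induction k)
  case (Suc k)
  have "(Wext_inv ^^ Suc (m + k)) (emb (V1 (Q (f (Suc (m + k)))))) = (\<lambda>j. 0)"
    by (simp only: assms emb_zero isometry_op_zero[OF V1] isometry_op_zero[OF Q_isometry]
        Wext_inv_pow_zero less_add_Suc1)
  then show ?case
    using Suc by (simp add: U1_approx_Suc)
qed simp

lemma U1_approx_add: "U1_approx (\<lambda>j. f j + g j) n = (\<lambda>j. U1_approx f n j + U1_approx g n j)"
  unfolding U1_approx_def QWext_pow_add isometry_op_add[OF V1] emb_add Wext_inv_pow_add ..

lemma U1_approx_scaleC: "U1_approx (\<lambda>j. c *\<^sub>C f j) n = (\<lambda>j. c *\<^sub>C U1_approx f n j)"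
  unfolding U1_approx_def QWext_pow_scaleC isometry_op_scaleC[OF V1] emb_scaleC Wext_inv_pow_scaleC ..

lemma U1_approx_in_K: "U1_approx f n \<in> K"
  unfolding U1_approx_def by (intro Wext_inv_pow_in_K emb_in_K)

lemma l2norm_U1_approx:
  assumes "g \<in> K" and "\<And>j. j > n \<Longrightarrow> g j = 0"
  shows "l2norm (U1_approx g n) = l2norm g"
proof -
  have "l2norm g = l2norm ((QWext ^^ n) g)"
    by (rule l2norm_QWext_pow[OF assms(1), symmetric])
  also have "\<dots> = norm (((QWext ^^ n) g) 0)"
    by (subst QWext_pow_finite_support[OF assms(2)]) (simp_all only: l2norm_emb)
  also have "\<dots> = l2norm (U1_approx g n)"
    unfolding U1_approx_def l2norm_Wext_inv_pow[OF emb_in_K] l2norm_emb isometry_op_norm[OF V1] ..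
  finally show ?thesis ..
qed

lemma U1_approx_diff: "U1_approx (\<lambda>j. f j - g j) n = (\<lambda>j. U1_approx f n j - U1_approx g n j)"
  using U1_approx_add[of f "\<lambda>j. (-1) *\<^sub>C g j" n] U1_approx_scaleC[of "-1" g n]
  by (simp add: scaleC_minus_one_left)

lemma U1_approx_trunc: "U1_approx f n = U1_approx (trunc f m) n" if "n \<le> m"
  using that by (intro U1_approx_cong) (simp add: trunc_def)

lemma l2dist_U1_approx:
  assumes f: "f \<in> K"
  shows "l2dist (U1_approx f m) (U1_approx f n) = l2dist (trunc f m) (trunc f n)"
proof -
  have *: "l2dist (U1_approx f m) (U1_approx f n) = l2dist (trunc f m) (trunc f n)" if "m \<le> n" for m n
  proof -
    have "U1_approx f m = U1_approx (trunc f m) n"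
      using U1_approx_stable[of m "trunc f m" "n - m"] U1_approx_trunc[of m m f] that
      by (simp add: trunc_def)
    moreover have "U1_approx f n = U1_approx (trunc f n) n"
      by (rule U1_approx_trunc) simp
    ultimately have "l2dist (U1_approx f m) (U1_approx f n)
        = l2norm (U1_approx (\<lambda>j. trunc f m j - trunc f n j) n)"
      by (simp add: U1_approx_diff)
    also have "\<dots> = l2dist (trunc f m) (trunc f n)"
      using that by (intro l2norm_U1_approx K_diff trunc_in_K f) (simp add: trunc_def)
    finally show ?thesis .
  qed
  show ?thesis
  proof (cases "m \<le> n")
    case False
    then show ?thesis
      using *[of n m] by (simp only: l2dist_commute[of "U1_approx f m"] l2dist_commute[of "trunc f m"])
  qed (rule *)
qed

definition U1 :: "(nat \<Rightarrow> 'a) \<Rightarrow> nat \<Rightarrow> 'a" where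
  "U1 f = l2_lim (U1_approx f)"

lemma U1_approx_tendsto:
  assumes f: "f \<in> K"
  shows "U1 f \<in> l2" and "(\<lambda>n. l2dist (U1_approx f n) (U1 f)) \<longlonglongrightarrow> 0"
proof -
  have "l2_Cauchy (U1_approx f)"
    using l2_Cauchy_trunc[OF K_l2[OF f]] unfolding l2_Cauchy_def l2dist_U1_approx[OF f] .
  then show "U1 f \<in> l2" "(\<lambda>n. l2dist (U1_approx f n) (U1 f)) \<longlonglongrightarrow> 0"
    unfolding U1_def using l2_complete K_l2[OF U1_approx_in_K] by blast+
qed

lemma U1_coord_tendsto: "f \<in> K \<Longrightarrow> (\<lambda>n. U1_approx f n j) \<longlonglongrightarrow> U1 f j"
  by (rule l2_limit_coord[OF K_l2[OF U1_approx_in_K] U1_approx_tendsto])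

lemma U1_in_K: "f \<in> K \<Longrightarrow> U1 f \<in> K"
  by (rule K_limit[OF U1_approx_in_K U1_approx_tendsto])

lemma l2norm_U1: "f \<in> K \<Longrightarrow> l2norm (U1 f) = l2norm f"
proof -
  assume f: "f \<in> K"
  have "l2norm (U1_approx f n) = l2norm (trunc f n)" for n
    unfolding U1_approx_trunc[of n n f, OF order_refl]
    by (rule l2norm_U1_approx[OF trunc_in_K[OF f]]) (simp add: trunc_def)
  moreover have "(\<lambda>n. l2norm (U1_approx f n)) \<longlonglongrightarrow> l2norm (U1 f)"
    using U1_approx_tendsto[OF f] by (intro l2norm_tendsto[OF K_l2[OF U1_approx_in_K]])
  moreover have "(\<lambda>n. l2norm (trunc f n)) \<longlonglongrightarrow> l2norm f"
    using l2dist_trunc_tendsto[OF K_l2[OF f]] l2dist_commute[of f]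
    by (intro l2norm_tendsto[OF trunc_l2 K_l2[OF f]]) simp
  ultimately show ?thesis
    using LIMSEQ_unique by fastforce
qed

lemma U1_add: "f \<in> K \<Longrightarrow> g \<in> K \<Longrightarrow> U1 (\<lambda>j. f j + g j) = (\<lambda>j. U1 f j + U1 g j)"
  unfolding U1_def l2_lim_def U1_approx_add
  by (intro ext limI tendsto_add U1_coord_tendsto[unfolded U1_def l2_lim_def])

lemma U1_scaleC: "f \<in> K \<Longrightarrow> U1 (\<lambda>j. c *\<^sub>C f j) = (\<lambda>j. c *\<^sub>C U1 f j)"
  unfolding U1_def l2_lim_def U1_approx_scaleC
  by (intro ext limI bounded_linear.tendsto[OF bounded_linear_scaleC_right]
      U1_coord_tendsto[unfolded U1_def l2_lim_def])

lemma U1_diff: "f \<in> K \<Longrightarrow> g \<in> K \<Longrightarrow> U1 (\<lambda>j. f j - g j) = (\<lambda>j. U1 f j - U1 g j)"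
  using U1_add[OF _ K_scaleC, of f g "-1"] U1_scaleC[of g "-1"] by (simp add: scaleC_minus_one_left)

lemma l2dist_U1: "f \<in> K \<Longrightarrow> g \<in> K \<Longrightarrow> l2dist (U1 f) (U1 g) = l2dist f g"
  using l2norm_U1[OF K_diff] by (simp add: U1_diff)

lemma U1_emb: "U1 (emb h) = emb (V1 h)"
proof -
  have "U1_approx (emb h) n = emb (V1 h)" for n
    using U1_approx_stable[of 0 "emb h" n] by (simp add: emb_def U1_approx_def)
  then show ?thesis
    unfolding U1_def l2_lim_def by simp
qed

lemma U1_approx_QWext: "U1_approx (QWext f) n = Wext (U1_approx f (Suc n))"
proof -
  have "(QWext ^^ n) (QWext f) = (QWext ^^ Suc n) f"
    by (simp only: funpow_Suc_right o_apply)
  then show ?thesis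
    unfolding U1_approx_def funpow.simps(2) o_apply Wext_Wext_inv by simp
qed

lemma Wext_U1:
  assumes f: "f \<in> K"
  shows "Wext (U1 f) = U1 (QWext f)"
proof
  fix j
  have "(\<lambda>n. Wext (U1_approx f (Suc n)) j) \<longlonglongrightarrow> Wext (U1 f) j"
    using LIMSEQ_Suc[OF U1_coord_tendsto[OF f]] by (rule Wext_coord_tendsto)
  then show "Wext (U1 f) j = U1 (QWext f) j"
    unfolding U1_def l2_lim_def U1_approx_QWext by (rule limI[symmetric])
qed

lemma U1_image_of_Wext_image:
  assumes g: "g \<in> K" and "Wext g \<in> U1 ` K"
  shows "g \<in> U1 ` K"
proof -
  obtain p' where p': "p' \<in> K" "U1 p' = Wext g"
    using assms(2) by (metis imageE)
  obtain r where r: "r \<in> K" "Qbar r = p'"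
    using Qbar_onto[OF p'(1)] by metis
  have p: "Wext_inv r \<in> K"
    by (rule Wext_inv_in_K[OF r(1)])
  have "Wext (U1 (Wext_inv r)) = Wext g"
    using Wext_U1[OF p] unfolding QWext_def Wext_Wext_inv r(2) p'(2) .
  from arg_cong[where f = Wext_inv, OF this] have "U1 (Wext_inv r) = g"
    by (simp only: Wext_inv_Wext[OF U1_in_K[OF p]] Wext_inv_Wext[OF g])
  then show ?thesis
    using p by blast
qed

lemma finite_support_in_U1_image:
  assumes g: "g \<in> K" and support: "\<And>j. j > n \<Longrightarrow> g j = 0"
  shows "g \<in> U1 ` K"
proof -
  have "Wext g \<in> U1 ` K"
    using g support
  proof (induction n arbitrary: g)
    case 0
    then have "g = emb (g 0)"
      unfolding emb_def by (simp add: fun_eq_iff)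
    then have "Wext g = U1 (emb (V2 (g 0)))"
      by (metis Wext_emb U1_emb)
    then show ?case
      using emb_in_K by (rule image_eqI)
  next
    case (Suc n)
    have "Wext g j = 0" if "j > n" for j
      using that Suc.prems(2) by (simp add: Wext_def)
    then have "Wext (Wext g) \<in> U1 ` K"
      by (rule Suc.IH[OF Wext_in_K[OF Suc.prems(1)]])
    then show ?case
      by (rule U1_image_of_Wext_image[OF Wext_in_K[OF Suc.prems(1)]])
  qed
  then show ?thesis
    by (rule U1_image_of_Wext_image[OF g])
qed

lemma U1_image: "U1 ` K = K"
proof
  show "U1 ` K \<subseteq> K"
    using U1_in_K by blast
  show "K \<subseteq> U1 ` K"
  proof
    fix g
    assume g: "g \<in> K"
    have "trunc g n \<in> U1 ` K" for n
      by (rule finite_support_in_U1_image[OF trunc_in_K[OF g], of n]) (simp add: trunc_def)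
    then obtain P where P: "\<And>n. P n \<in> K" "\<And>n. U1 (P n) = trunc g n"
      unfolding image_iff by metis
    have "l2_Cauchy P"
      using l2_Cauchy_trunc[OF K_l2[OF g]] unfolding l2_Cauchy_def l2dist_U1[OF P(1) P(1), symmetric] P(2) .
    note lim = l2_complete[OF K_l2[OF P(1)] this]
    have p: "l2_lim P \<in> K"
      by (rule K_limit[OF P(1) lim])
    have "(\<lambda>k. l2dist (trunc g k) (U1 (l2_lim P))) \<longlonglongrightarrow> 0"
      using lim(2) unfolding l2dist_U1[OF P(1) p, symmetric] P(2) .
    moreover have "(\<lambda>k. l2dist (trunc g k) g) \<longlonglongrightarrow> 0"
      using l2dist_trunc_tendsto[OF K_l2[OF g]] by (simp only: l2dist_commute[of g])
    ultimately have "U1 (l2_lim P) = g"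
      by (rule l2_limit_unique[OF trunc_l2 K_l2[OF U1_in_K[OF p]] K_l2[OF g]])
    then show "g \<in> U1 ` K"
      using p by (metis image_eqI)
  qed
qed

lemma unitary_on_U1: "unitary_on K U1"
  unfolding unitary_on_def using U1_image U1_add U1_scaleC l2norm_U1 by blast

definition U2 :: "(nat \<Rightarrow> 'a) \<Rightarrow> nat \<Rightarrow> 'a" where
  "U2 f = inv_into K U1 (Wext f)"

lemma U2_in_K: "f \<in> K \<Longrightarrow> U2 f \<in> K"
  unfolding U2_def by (rule inv_into_into) (simp add: U1_image Wext_in_K)

lemma U1_U2: "f \<in> K \<Longrightarrow> U1 (U2 f) = Wext f"
  unfolding U2_def using f_inv_into_f[of "Wext f" U1 K] by (simp add: U1_image Wext_in_K)

lemma inj_on_U1: "inj_on U1 K"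
proof (rule inj_onI)
  fix f g
  assume f: "f \<in> K" and g: "g \<in> K" and "U1 f = U1 g"
  then have "l2dist f g = 0"
    using l2dist_U1[OF f g] by (simp add: l2norm_def)
  then have "(\<lambda>n. f n - g n) = (\<lambda>n. 0)"
    by (rule l2norm_eq_0[OF l2_diff[OF K_l2[OF f] K_l2[OF g]]])
  then show "f = g"
    by (simp add: fun_eq_iff)
qed

lemma U2_eqI:
  assumes "p \<in> K" "U1 p = Wext f"
  shows "U2 f = p"
  unfolding U2_def assms(2)[symmetric] by (rule inv_into_f_f[OF inj_on_U1 assms(1)])

lemma unitary_on_U2: "unitary_on K U2"
  unfolding unitary_on_def
proof (intro conjI ballI allI)
  show "U2 ` K = K"
  proof
    show "U2 ` K \<subseteq> K"
      using U2_in_K by blast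
    show "K \<subseteq> U2 ` K"
    proof
      fix g
      assume g: "g \<in> K"
      have "U2 (Wext_inv (U1 g)) = g"
        by (rule U2_eqI[OF g]) (simp add: Wext_Wext_inv)
      then show "g \<in> U2 ` K"
        using Wext_inv_in_K[OF U1_in_K[OF g]] by (metis image_eqI)
    qed
  qed
  fix f g
  assume f: "f \<in> K"
  show "l2norm (U2 f) = l2norm f"
    using l2norm_U1[OF U2_in_K[OF f]] U1_U2[OF f] l2norm_Wext[OF f] by simp
  show "U2 (\<lambda>n. c *\<^sub>C f n) = (\<lambda>n. c *\<^sub>C U2 f n)" for c
    by (rule U2_eqI[OF K_scaleC[OF U2_in_K[OF f]]]) (simp add: U1_scaleC U2_in_K f U1_U2 Wext_scaleC)
  assume g: "g \<in> K"
  show "U2 (\<lambda>n. f n + g n) = (\<lambda>n. U2 f n + U2 g n)"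
    by (rule U2_eqI[OF K_add[OF U2_in_K[OF f] U2_in_K[OF g]]])
      (simp add: U1_add U2_in_K f g U1_U2 Wext_add)
qed

lemma U2_emb: "U2 (emb h) = emb (V2 h)"
  by (rule U2_eqI[OF emb_in_K]) (simp add: U1_emb Wext_emb)

lemma U2_U1_eq_Qbar_U1_U2:
  assumes f: "f \<in> K"
  shows "U2 (U1 f) = Qbar (U1 (U2 f))"
proof -
  have "U2 (U1 f) = QWext f"
    by (rule U2_eqI[OF QWext_in_K[OF f]]) (rule Wext_U1[OF f, symmetric])
  then show ?thesis
    by (simp add: U1_U2[OF f] QWext_def)
qed

lemma U1_pow_emb: "(U1 ^^ n) (emb h) = emb ((V1 ^^ n) h)"
  by (induction n) (simp_all add: U1_emb)

lemma U2_pow_emb: "(U2 ^^ n) (emb h) = emb ((V2 ^^ n) h)"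
  by (induction n) (simp_all add: U2_emb)

end

theorem mainTheorem11:
  fixes V1 V2 Q :: "'h::chilbert_space \<Rightarrow> 'h" and q :: complex
  assumes "isometry_op V1" and "isometry_op V2" and "unitary_op Q"
    and "\<And>x. V2 (V1 x) = Q (V1 (V2 x))"
    and "norm q = 1"
  shows "\<exists>(K :: (nat \<Rightarrow> 'h) set) Qb U1 U2.
     closed_subspace_l2 K \<and> (\<forall>h. emb h \<in> K) \<and>
     unitary_on K Qb \<and> unitary_on K U1 \<and> unitary_on K U2 \<and>
     (\<forall>h. Qb (emb h) = emb (Q h)) \<and>
     (\<forall>f\<in>K. f 0 = 0 \<longrightarrow> Qb f = (\<lambda>n. q *\<^sub>C f n)) \<and>
     (\<forall>f\<in>K. f 0 = 0 \<longrightarrow> Qb f \<in> K \<and> Qb f 0 = 0) \<and>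
     (\<forall>f\<in>K. U2 (U1 f) = Qb (U1 (U2 f))) \<and>
     (\<forall>h. U1 (emb h) = emb (V1 h)) \<and> (\<forall>h. U2 (emb h) = emb (V2 h)) \<and>
     (\<forall>n m h. (V1 ^^ n) ((V2 ^^ m) h) = projH ((U1 ^^ n) ((U2 ^^ m) (emb h)))) \<and>
     (\<forall>n m h. (V2 ^^ n) ((V1 ^^ m) h) = projH ((U2 ^^ n) ((U1 ^^ m) (emb h))))"
proof -
  interpret q_commuting_isometries V1 V2 Q q
    using assms by unfold_locales
  show ?thesis
  proof (rule exI[of _ K], rule exI[of _ Qbar], rule exI[of _ U1], rule exI[of _ U2],
      intro conjI allI ballI impI)
    show "closed_subspace_l2 K" "unitary_on K Qbar" "unitary_on K U1" "unitary_on K U2"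
      by (fact closed_subspace_K unitary_on_Qbar unitary_on_U1 unitary_on_U2)+
    show "emb h \<in> K" "Qbar (emb h) = emb (Q h)" "U1 (emb h) = emb (V1 h)" "U2 (emb h) = emb (V2 h)"
      for h by (fact emb_in_K Qbar_emb U1_emb U2_emb)+
    fix f
    assume f: "f \<in> K"
    show "U2 (U1 f) = Qbar (U1 (U2 f))"
      by (rule U2_U1_eq_Qbar_U1_U2[OF f])
    show "Qbar f \<in> K"
      by (rule Qbar_in_K[OF f])
    assume "f 0 = 0"
    then show "Qbar f = (\<lambda>n. q *\<^sub>C f n)" "Qbar f 0 = 0"
      by (simp_all add: Qbar_off_H)
  qed (simp_all add: U1_pow_emb U2_pow_emb projH_emb)
qed

end
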